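(* Let $\mathrm{SG}(n)$ denote the Sprague--Grundy value of a pile of $n$ tokens in the game $i\textsc{-Mark}(\{1\},\{2,3\})$. Let $m$ be a nonnegative integer with $m\equiv 5\pmod 6$, and suppose that $\mathrm{SG}(m-i)\neq 2$ for all integers $i$ with $0\le i\le 7$ and $i\le m$. Then $\mathrm{SG}(m)=0$.
   Context: In the impartial game $i\textsc{-Mark}(\{1\},\{2,3\})$, played on a single pile of $n\ge0$ tokens, a move replaces $n$ by $n-1$ (if $n\ge 1$), or by $n/2$ if $n>0$ is even, or by $n/3$ if $n>0$ is divisible by $3$. The Sprague--Grundy value is defined recursively by $\mathrm{SG}(n)=\mathrm{mex}\{\mathrm{SG}(w): w \text{ an option of } n\}$, where $\mathrm{mex}(T)$ is the smallest nonnegative integer not in $T$. *)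

theory Defs
  imports Main
begin

definition mex :: "nat set \<Rightarrow> nat" where
  "mex T = (LEAST k. k \<notin> T)"

definition options :: "nat \<Rightarrow> nat set" where
  "options n = {w. (n \<ge> 1 \<and> w = n - 1) \<or> (n > 0 \<and> 2 dvd n \<and> w = n div 2)
                   \<or> (n > 0 \<and> 3 dvd n \<and> w = n div 3)}"

function SG :: "nat \<Rightarrow> nat" where
  "SG n = mex (SG ` options n)"
  by auto
termination
proof (relation "measure id")
  show "wf (measure id)" by simp
next
  fix n w assume "w \<in> options n"
  then show "(w, n) \<in> measure id" by (auto simp: options_def)
qed

end

theory Submission
  imports Defs
begin

text \<open>
  Write m = 6k + 5 and suppose SG(m) \<noteq> 0. A position whose only option is w has value 0
  exactly when SG(w) \<noteq> 0, and a position not divisible by 6 has at most two options, so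
  its value is at most 2. Going down from m (only 6k+3 and 6k+2 need the hypothesis), one
  finds SG(6k+4) = 0, SG(6k+3) = 1, SG(6k+2) = 0 and SG(6k) = 0, so the halves 3k+2 and
  3k+1 of 6k+4 and 6k+2 have non-zero values. But one of 3k+1, 3k+2 is coprime to 6, and
  its only option (3k+1, or 3k, a half of 6k) has a non-zero value too; for k = 0 the
  position 2 has the single option 1.
\<close>

declare SG.simps[simp del]

lemma mex_notin: "finite T \<Longrightarrow> mex T \<notin> T"
  unfolding mex_def by (rule LeastI_ex) (meson ex_new_if_finite infinite_UNIV_nat)

lemma less_mex_in: "k < mex T \<Longrightarrow> k \<in> T"
  unfolding mex_def using not_less_Least by blast

lemma mex_le_card:
  assumes "finite T" shows "mex T \<le> card T"
proof -
  have "{..<mex T} \<subseteq> T" using less_mex_in by blast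
  then show ?thesis using assms by (metis card_lessThan card_mono)
qed

lemma options_subset: "options n \<subseteq> {n - 1, n div 2, n div 3}"
  by (auto simp: options_def)

lemma options_finite: "finite (options n)"
  using options_subset finite_subset by blast

lemma options_Suc_odd_not_dvd3: "odd (Suc w) \<Longrightarrow> \<not> 3 dvd Suc w \<Longrightarrow> options (Suc w) = {w}"
  by (auto simp: options_def)

lemma SG_option_neq:
  assumes "w \<in> options n" shows "SG w \<noteq> SG n"
proof -
  have "SG n \<notin> SG ` options n"
    using mex_notin[of "SG ` options n"] options_finite SG.simps[of n] by simp
  then show ?thesis using assms by (metis imageI)
qed

lemma SG_less_attained: "j < SG n \<Longrightarrow> \<exists>w \<in> options n. SG w = j"
  using less_mex_in[of j "SG ` options n"] SG.simps[of n] by auto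

lemma SG_le_card_option_set: "SG n \<le> card (options n)"
proof -
  have "SG n \<le> card (SG ` options n)"
    using mex_le_card[of "SG ` options n"] options_finite SG.simps[of n] by simp
  also have "\<dots> \<le> card (options n)" using card_image_le options_finite by blast
  finally show ?thesis .
qed

lemma SG_le_2_if_not_dvd6:
  assumes "\<not> 6 dvd n" shows "SG n \<le> 2"
proof -
  have "options n \<subseteq> {n - 1, n div 2} \<or> options n \<subseteq> {n - 1, n div 3}"
    using assms by (auto simp: options_def)
  moreover have "card {a, b :: nat} \<le> 2" for a b by (simp add: card_insert_if)
  ultimately have "card (options n) \<le> 2"
    by (meson card_mono finite.emptyI finite.insertI le_trans)
  then show ?thesis using SG_le_card_option_set le_trans by blast
qed

lemma SG_single_option:
  assumes "options n = {w}" shows "SG n = 0 \<longleftrightarrow> SG w \<noteq> 0"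
proof
  assume "SG n = 0" then show "SG w \<noteq> 0" using SG_option_neq[of w n] assms by simp
next
  assume "SG w \<noteq> 0"
  have "SG n \<le> 1" using SG_le_card_option_set[of n] assms by simp
  moreover have "SG n \<noteq> 1" using SG_less_attained[of 0 n] assms \<open>SG w \<noteq> 0\<close> by auto
  ultimately show "SG n = 0" by simp
qed

lemma SG_zero_at_3k1_or_3k2:
  assumes SG_6k: "SG (6 * k) = 0" shows "SG (3 * k + 1) = 0 \<or> SG (3 * k + 2) = 0"
proof (cases "even k")
  case True
  show ?thesis
  proof (cases "k = 0")
    case True
    have "options 2 = {1}" by (auto simp: options_def)
    then have "SG 2 = 0 \<longleftrightarrow> SG 1 \<noteq> 0" by (rule SG_single_option)
    with True show ?thesis by (auto simp: numeral_2_eq_2)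
  next
    case False
    have "3 * k \<in> options (6 * k)" using False by (simp add: options_def)
    then have "SG (3 * k) \<noteq> 0" using SG_option_neq SG_6k by metis
    moreover have "options (Suc (3 * k)) = {3 * k}"
      by (rule options_Suc_odd_not_dvd3) (use \<open>even k\<close> in presburger)+
    ultimately have "SG (Suc (3 * k)) = 0" using SG_single_option by simp
    then show ?thesis by simp
  qed
next
  case False
  have "options (Suc (3 * k + 1)) = {3 * k + 1}"
    by (rule options_Suc_odd_not_dvd3) (use False in presburger)+
  then have "SG (Suc (3 * k + 1)) = 0 \<longleftrightarrow> SG (3 * k + 1) \<noteq> 0" by (rule SG_single_option)
  then show ?thesis by auto
qed

theorem mainTheorem7:
  fixes m :: nat
  assumes "m mod 6 = 5"
    and "\<forall>i::nat. i \<le> 7 \<and> i \<le> m \<longrightarrow> SG (m - i) \<noteq> 2"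
  shows "SG m = 0"
proof (rule ccontr)
  assume "SG m \<noteq> 0"
  define k where "k = m div 6"
  have m: "m = Suc (6 * k + 4)" using assms(1) unfolding k_def by presburger
  have "SG (m - 2) \<noteq> 2" "SG (m - 3) \<noteq> 2" by (rule assms(2)[rule_format]; simp add: m)+
  moreover have "m - 2 = 6 * k + 3" "m - 3 = 6 * k + 2" by (simp_all add: m)
  ultimately have not2: "SG (6 * k + 3) \<noteq> 2" "SG (6 * k + 2) \<noteq> 2" by metis+
  have opts4: "6 * k + 3 \<in> options (6 * k + 4)" "3 * k + 2 \<in> options (6 * k + 4)"
    and opts3: "6 * k + 2 \<in> options (6 * k + 3)"
    and opts2: "Suc (6 * k) \<in> options (6 * k + 2)" "3 * k + 1 \<in> options (6 * k + 2)"
    by (simp_all add: options_def)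
  have "options m = {6 * k + 4}" unfolding m by (rule options_Suc_odd_not_dvd3) presburger+
  then have SG4: "SG (6 * k + 4) = 0" using SG_single_option \<open>SG m \<noteq> 0\<close> by simp
  have "SG (6 * k + 3) \<le> 2" by (rule SG_le_2_if_not_dvd6) presburger
  then have SG3: "SG (6 * k + 3) = 1" using SG_option_neq[OF opts4(1)] SG4 not2(1) by linarith
  have "SG (6 * k + 2) \<le> 2" by (rule SG_le_2_if_not_dvd6) presburger
  then have SG2: "SG (6 * k + 2) = 0" using SG_option_neq[OF opts3] SG3 not2(2) by linarith
  have "options (Suc (6 * k)) = {6 * k}" by (rule options_Suc_odd_not_dvd3) presburger+
  then have "SG (6 * k) = 0" using SG_single_option SG_option_neq[OF opts2(1)] SG2 by simp
  then have "SG (3 * k + 1) = 0 \<or> SG (3 * k + 2) = 0" by (rule SG_zero_at_3k1_or_3k2)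
  then show False using SG_option_neq[OF opts2(2)] SG_option_neq[OF opts4(2)] SG2 SG4 by auto
qed

end
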